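(* Let $q$ be a prime power, let $d\in\mathbb{Z}_{\geqslant 1}$, let $\mathcal{Q}_d$ be a monic irreducible polynomial in $\mathbb{F}_q[T]$ of degree $d$, and let $s,\ell\in\mathbb{Z}_{\geqslant 0}$ with $0\leqslant \ell<d$. Let $F_0=1$ and $F_i=(-1)^i+(T^{q^i}-T)F_{i-1}$ for $i\in\mathbb{Z}_{\geqslant 1}$. Then $$F_{sd+\ell}\equiv(-1)^{sd}F_\ell \pmod{\mathcal{Q}_d}.$$ *)

theory Defs
  imports "HOL-Computational_Algebra.Polynomial_Factorial" "HOL-Number_Theory.Cong" "HOL-Library.Cardinality"
begin

fun Fpoly :: "nat \<Rightarrow> 'a::{finite,field} poly" where
  "Fpoly 0 = 1"
| "Fpoly (Suc i) = (-1) ^ Suc i + (monom 1 (CARD('a) ^ Suc i) - [:0, 1:]) * Fpoly i"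

end

(* Modulo an irreducible Q of degree d, Fermat's little theorem in the field F_q[T]/(Q) of
   q^d elements gives T^(q^(sd)) = T, hence T^(q^(sd+i)) = T^(q^i). So modulo Q the
   factor T^(q^i) - T of the recursion is periodic in i with period sd and vanishes at
   i = sd; thus F_(sd) = (-1)^(sd), and from there F_(sd+l) follows the recursion of F_l
   scaled by (-1)^(sd). *)

theory Submission
  imports Defs "HOL-Library.FuncSet"
begin

lemma card_poly_degree_less:
  assumes "n > 0"
  shows "card {p :: 'a::{finite,comm_monoid_add} poly. degree p < n} = CARD('a) ^ n"
proof -
  have "bij_betw (\<lambda>p. restrict (coeff p) {..<n}) {p :: 'a poly. degree p < n} ({..<n} \<rightarrow>\<^sub>E UNIV)"
  proof (rule bij_betw_imageI)
    show "inj_on (\<lambda>p. restrict (coeff p) {..<n}) {p :: 'a poly. degree p < n}"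
    proof (rule inj_onI, rule poly_eqI)
      fix p q :: "'a poly" and i
      assume "p \<in> {p. degree p < n}" "q \<in> {p. degree p < n}"
        and "restrict (coeff p) {..<n} = restrict (coeff q) {..<n}"
      then show "coeff p i = coeff q i"
        by (cases "i < n") (auto simp: coeff_eq_0 dest: fun_cong[where x = i])
    qed
    show "(\<lambda>p. restrict (coeff p) {..<n}) ` {p :: 'a poly. degree p < n} = {..<n} \<rightarrow>\<^sub>E UNIV"
    proof (intro equalityI subsetI)
      fix f :: "nat \<Rightarrow> 'a"
      assume f: "f \<in> {..<n} \<rightarrow>\<^sub>E UNIV"
      define p where "p = (\<Sum>i<n. monom (f i) i)"
      have "degree p \<le> n - 1"
        unfolding p_def by (rule degree_le) (use assms in \<open>auto simp: coeff_sum\<close>)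
      moreover have "restrict (coeff p) {..<n} = f"
        using f by (auto simp: p_def coeff_sum PiE_def extensional_def)
      ultimately show "f \<in> (\<lambda>p. restrict (coeff p) {..<n}) ` {p. degree p < n}"
        using assms by force
    qed (erule imageE, simp)
  qed
  then show ?thesis
    by (simp add: bij_betw_same_card card_PiE)
qed

lemma prime_elem_dvd_prod_iff:
  assumes "prime_elem p" "finite A"
  shows "p dvd prod f A \<longleftrightarrow> (\<exists>x\<in>A. p dvd f x)"
  using assms(2)
proof (induction A rule: finite_induct)
  case empty
  then show ?case
    using assms(1) by (simp add: prime_elem_not_unit)
next
  case (insert x A)
  then show ?case
    using assms(1) by (simp add: prime_elem_dvd_mult_iff)
qed

lemma prime_elem_cong_mult_rcancel:
  fixes a b k m :: "'a::unique_euclidean_ring"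
  assumes "prime_elem m" "\<not> m dvd k"
  shows "[a * k = b * k] (mod m) \<longleftrightarrow> [a = b] (mod m)"
  using assms by (simp add: cong_iff_dvd_diff prime_elem_dvd_mult_iff flip: left_diff_distrib)

lemma irreducible_poly_degree_pos:
  fixes Q :: "'a::field poly"
  assumes "irreducible Q"
  shows "degree Q > 0"
  using assms is_unit_iff_degree[of Q] by (auto simp: irreducible_def)

text \<open>Multiplication by a modulo Q permutes the nonzero remainders, so their product P
  satisfies a^|S| P = P, and P can be cancelled because Q is prime.\<close>

lemma irreducible_poly_power_card_minus_one_cong:
  fixes Q a :: "'a::{finite,field} poly"
  assumes "irreducible Q" and a: "\<not> Q dvd a"
  shows "[a ^ (CARD('a) ^ degree Q - 1) = 1] (mod Q)"
proof -
  have Q: "prime_elem Q"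
    using assms(1) by (rule field_poly_irreducible_imp_prime)
  have degQ: "degree Q > 0"
    using assms(1) by (rule irreducible_poly_degree_pos)
  define S where "S = {p :: 'a poly. degree p < degree Q} - {0}"
  have card_S: "card S = CARD('a) ^ degree Q - 1"
    using degQ by (simp add: S_def card_poly_degree_less card_Diff_singleton)
  have "finite S"
    unfolding S_def using degQ by (intro finite_Diff card_ge_0_finite) (simp add: card_poly_degree_less)
  have S_not_dvd: "\<not> Q dvd x" if "x \<in> S" for x
    using that by (auto simp: S_def dest: dvd_imp_degree_le)
  define f where "f x = (a * x) mod Q" for x
  have f_S: "f x \<in> S" if "x \<in> S" for x
  proof -
    have "\<not> Q dvd a * x"
      using Q a S_not_dvd[OF that] by (simp add: prime_elem_dvd_mult_iff)
    then have "a * x mod Q \<noteq> 0"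
      by (simp add: mod_eq_0_iff_dvd)
    moreover have "Q \<noteq> 0"
      using degQ by auto
    ultimately show ?thesis
      by (simp add: S_def f_def degree_mod_less')
  qed
  have "inj_on f S"
  proof (rule inj_onI)
    fix x y assume "x \<in> S" "y \<in> S" "f x = f y"
    then have "[x * a = y * a] (mod Q)"
      by (simp add: f_def cong_def mult.commute)
    then have "[x = y] (mod Q)"
      using Q a by (simp add: prime_elem_cong_mult_rcancel)
    then show "x = y"
      using \<open>x \<in> S\<close> \<open>y \<in> S\<close> by (simp add: cong_def S_def mod_poly_less)
  qed
  then have "f ` S = S"
    using \<open>finite S\<close> f_S by (intro endo_inj_surj) auto
  then have "prod id S = prod f S"
    using prod.reindex[OF \<open>inj_on f S\<close>, of id] by simp
  also have "[\<dots> = (\<Prod>x\<in>S. a * x)] (mod Q)"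
    by (rule cong_prod) (simp add: f_def)
  also have "(\<Prod>x\<in>S. a * x) = a ^ card S * prod id S"
    by (simp add: prod.distrib)
  finally have "[1 * prod id S = a ^ card S * prod id S] (mod Q)"
    by simp
  moreover have "\<not> Q dvd prod id S"
    using Q \<open>finite S\<close> S_not_dvd by (simp add: prime_elem_dvd_prod_iff)
  ultimately have "[1 = a ^ card S] (mod Q)"
    using Q prime_elem_cong_mult_rcancel by blast
  then show ?thesis
    by (simp add: card_S cong_sym)
qed

lemma irreducible_poly_power_card_cong:
  fixes Q a :: "'a::{finite,field} poly"
  assumes "irreducible Q"
  shows "[a ^ (CARD('a) ^ degree Q) = a] (mod Q)"
proof (cases "Q dvd a")
  case True
  moreover have "a dvd a ^ (CARD('a) ^ degree Q)"
    by (rule dvd_power) simp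
  ultimately have "Q dvd a ^ (CARD('a) ^ degree Q)"
    by (rule dvd_trans)
  with True show ?thesis
    by (simp add: cong_def dvd_imp_mod_0)
next
  case False
  then have "[a * a ^ (CARD('a) ^ degree Q - 1) = a * 1] (mod Q)"
    using assms by (intro cong_scalar_left irreducible_poly_power_card_minus_one_cong)
  then show ?thesis
    by (simp flip: power_Suc)
qed

lemma cong_power_power_self:
  fixes a m :: "'a::unique_euclidean_semiring"
  assumes "[a ^ e = a] (mod m)"
  shows "[a ^ (e ^ k) = a] (mod m)"
proof (induction k)
  case 0
  then show ?case
    by simp
next
  case (Suc k)
  have "a ^ (e ^ Suc k) = (a ^ e) ^ (e ^ k)"
    by (simp add: power_mult mult.commute)
  also have "[\<dots> = a ^ (e ^ k)] (mod m)"
    using assms by (rule cong_pow)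
  finally show ?case
    using Suc.IH by (rule cong_trans)
qed

lemma Fpoly_add_cong:
  fixes Q :: "'a::{finite,field} poly"
  assumes "[monom 1 (CARD('a) ^ n) = [:0, 1:]] (mod Q)"
  shows "[Fpoly (n + l) = (-1) ^ n * Fpoly l] (mod Q)"
proof -
  define D :: "nat \<Rightarrow> 'a poly" where "D i = monom 1 (CARD('a) ^ i) - [:0, 1:]" for i
  have Fpoly_Suc: "Fpoly (Suc i) = (-1) ^ Suc i + D (Suc i) * Fpoly i" for i
    by (simp add: D_def)
  have D_cong: "[D (n + i) = D i] (mod Q)" for i
  proof -
    have "monom 1 (CARD('a) ^ (n + i)) = (monom 1 (CARD('a) ^ n) :: 'a poly) ^ (CARD('a) ^ i)"
      by (simp add: monom_power power_add)
    also have "[\<dots> = [:0, 1:] ^ (CARD('a) ^ i)] (mod Q)"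
      using assms by (rule cong_pow)
    finally show ?thesis
      unfolding D_def by (intro cong_diff) (simp_all add: monom_altdef)
  qed
  show ?thesis
  proof (induction l)
    case 0
    show ?case
    proof (cases n)
      case (Suc m)
      have "[D n = 0] (mod Q)"
        using D_cong[of 0] by (simp add: D_def monom_altdef)
      then have "[(-1) ^ n + D n * Fpoly m = (-1) ^ n + 0 * Fpoly m] (mod Q)"
        by (intro cong_add cong_mult) simp_all
      then show ?thesis
        by (simp add: Suc Fpoly_Suc del: Fpoly.simps(2))
    qed simp
  next
    case (Suc l)
    have "Fpoly (n + Suc l) = (-1) ^ Suc (n + l) + D (n + Suc l) * Fpoly (n + l)"
      by (simp only: add_Suc_right Fpoly_Suc)
    also have "[\<dots> = (-1) ^ Suc (n + l) + D (Suc l) * ((-1) ^ n * Fpoly l)] (mod Q)"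
      using D_cong[of "Suc l"] Suc.IH by (intro cong_add cong_mult) simp_all
    also have "(-1) ^ Suc (n + l) + D (Suc l) * ((-1) ^ n * Fpoly l) = (-1) ^ n * Fpoly (Suc l)"
      by (simp only: Fpoly_Suc) (simp add: power_add algebra_simps)
    finally show ?case .
  qed
qed

theorem lemma3p1:
  fixes Q :: "'a::{finite,field} poly" and d s l :: nat
  assumes "d \<ge> 1"
    and "lead_coeff Q = 1"
    and "irreducible Q"
    and "degree Q = d"
    and "l < d"
  shows "[Fpoly (s * d + l) = (-1) ^ (s * d) * (Fpoly l :: 'a poly)] (mod Q)"
proof -
  have "[[:0, 1:] ^ (CARD('a) ^ d) = [:0, 1:]] (mod Q)"
    using irreducible_poly_power_card_cong[OF assms(3)] assms(4) by simp
  then have "[[:0, 1:] ^ ((CARD('a) ^ d) ^ s) = [:0, 1:]] (mod Q)"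
    by (rule cong_power_power_self)
  then have "[monom 1 (CARD('a) ^ (s * d)) = [:0, 1:]] (mod Q)"
    by (simp add: monom_altdef power_mult mult.commute)
  then show ?thesis
    by (rule Fpoly_add_cong)
qed

end
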